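(* Let a nondegenerate triangle with circumradius $R$ be circumscribed about an ellipse with linear eccentricity $c$ whose center coincides with the circumcenter of the triangle. Then the triangle is acute if and only if $R>c$, and it is obtuse if and only if $R<c$.
   Context: The linear eccentricity of an ellipse is half the distance between its foci. A triangle is circumscribed about a conic if each of its three sidelines is tangent to the conic. *)

theory Defs
  imports "HOL-Analysis.Analysis"
begin

type_synonym point = "real^2"

text \<open>Ellipse given by its foci F1, F2 and semi-major axis a (sum of focal distances 2a);
  it is a genuine (nondegenerate) ellipse iff dist F1 F2 < 2a; F1 = F2 gives a circle.\<close>
definition ellipse :: "point \<Rightarrow> point \<Rightarrow> real \<Rightarrow> point set" where
  "ellipse F1 F2 a = {P. dist P F1 + dist P F2 = 2 * a}"

definition ellipse_center :: "point \<Rightarrow> point \<Rightarrow> point" where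
  "ellipse_center F1 F2 = midpoint F1 F2"

definition linear_eccentricity :: "point \<Rightarrow> point \<Rightarrow> real" where
  "linear_eccentricity F1 F2 = dist F1 F2 / 2"

definition line_through :: "point \<Rightarrow> point \<Rightarrow> point set" where
  "line_through P Q = {P + t *\<^sub>R (Q - P) | t. True}"

definition tangent_line :: "point set \<Rightarrow> point set \<Rightarrow> bool" where
  "tangent_line L E \<longleftrightarrow> (\<exists>!P. P \<in> L \<and> P \<in> E)"

definition nondegenerate_triangle :: "point \<Rightarrow> point \<Rightarrow> point \<Rightarrow> bool" where
  "nondegenerate_triangle A B C \<longleftrightarrow> \<not> collinear {A, B, C}"

definition circumscribed_about :: "point \<Rightarrow> point \<Rightarrow> point \<Rightarrow> point set \<Rightarrow> bool" where
  "circumscribed_about A B C E \<longleftrightarrow>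
     tangent_line (line_through A B) E \<and> tangent_line (line_through B C) E \<and>
     tangent_line (line_through C A) E"

definition is_circumcenter :: "point \<Rightarrow> point \<Rightarrow> point \<Rightarrow> point \<Rightarrow> bool" where
  "is_circumcenter Oc A B C \<longleftrightarrow> dist Oc A = dist Oc B \<and> dist Oc B = dist Oc C"

definition vertex_angle :: "point \<Rightarrow> point \<Rightarrow> point \<Rightarrow> real" where
  "vertex_angle A B C = arccos (((A - B) \<bullet> (C - B)) / (norm (A - B) * norm (C - B)))"

definition acute_triangle :: "point \<Rightarrow> point \<Rightarrow> point \<Rightarrow> bool" where
  "acute_triangle A B C \<longleftrightarrow>
     vertex_angle B A C < pi / 2 \<and> vertex_angle A B C < pi / 2 \<and> vertex_angle A C B < pi / 2"

definition obtuse_triangle :: "point \<Rightarrow> point \<Rightarrow> point \<Rightarrow> bool" where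
  "obtuse_triangle A B C \<longleftrightarrow>
     vertex_angle B A C > pi / 2 \<or> vertex_angle A B C > pi / 2 \<or> vertex_angle A C B > pi / 2"

end

theory Submission
  imports Defs "HOL-Library.Quadratic_Discriminant"
begin

(* Put the common centre at the origin and use complex coordinates: the vertices z1, z2, z3
   lie on the circle |z| = R and the foci are w and -w.  A line is tangent to the ellipse iff
   its squared distance from the centre is a^2 - (v \<bullet> w)^2, v its unit direction.  For the
   chord through z_i and z_j this reads
     Re (w^2 conj (z_i z_j)) = R^2 (Re (z_i conj z_j) + R^2 + |w|^2 - 2 a^2),
   and the three sides together force w^2 = -(z1 z2 + z2 z3 + z3 z1).  Taking moduli gives
   c^2 = |w|^2 = R |z1 + z2 + z3| = R * OH with H the orthocentre.  Finally
   R^2 - OH^2 = 8 R^2 cos A cos B cos C, so the triangle is acute iff OH < R iff c < R and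
   obtuse iff OH > R iff c > R. *)

section \<open>Tangent lines of an ellipse\<close>

lemma discrim_eq_0_if_unique_root:
  fixes a b c :: real
  assumes "a \<noteq> 0" and "\<exists>!x. a * x\<^sup>2 + b * x + c = 0"
  shows "discrim a b c = 0"
proof -
  obtain x where x: "a * x\<^sup>2 + b * x + c = 0"
    and uniq: "\<And>y. a * y\<^sup>2 + b * y + c = 0 \<Longrightarrow> y = x"
    using assms(2) by blast
  have "\<not> discrim a b c < 0" using discriminant_negative[OF assms(1)] x by blast
  moreover have "\<not> discrim a b c > 0" using discriminant_pos_distinct[OF assms(1)] uniq by blast
  ultimately show ?thesis by linarith
qed

lemma inner_self_less_power2:
  fixes x :: "'a::real_inner"
  assumes "norm x < a"
  shows "x \<bullet> x < a\<^sup>2"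
proof -
  have "(norm x)\<^sup>2 < a\<^sup>2" using assms norm_ge_zero[of x] by (intro power_strict_mono) auto
  then show ?thesis by (simp add: power2_norm_eq_inner)
qed

lemma focal_sum_eq_iff:
  fixes X f :: "'a::real_inner"
  assumes "norm f < a"
  shows "norm (X - f) + norm (X + f) = 2 * a \<longleftrightarrow> a\<^sup>2 * (X \<bullet> X) - (X \<bullet> f)\<^sup>2 = a\<^sup>2 * (a\<^sup>2 - f \<bullet> f)"
proof -
  have "a > 0" using assms norm_ge_zero[of f] by linarith
  have ff: "f \<bullet> f < a\<^sup>2" using assms by (rule inner_self_less_power2)
  define d where "d = (X \<bullet> f) / a"
  have minus: "(norm (X - f))\<^sup>2 = X \<bullet> X - 2 * (X \<bullet> f) + f \<bullet> f"
    by (simp add: power2_norm_eq_inner inner_diff inner_commute)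
  have plus: "(norm (X + f))\<^sup>2 = X \<bullet> X + 2 * (X \<bullet> f) + f \<bullet> f"
    by (simp add: power2_norm_eq_inner inner_add inner_commute)
  have eq_minus: "a\<^sup>2 * (X \<bullet> X) - (X \<bullet> f)\<^sup>2 = a\<^sup>2 * (a\<^sup>2 - f \<bullet> f) \<longleftrightarrow> (norm (X - f))\<^sup>2 = (a - d)\<^sup>2"
    unfolding minus d_def using \<open>a > 0\<close> by (simp add: field_simps power2_eq_square)
  have eq_plus: "(norm (X - f))\<^sup>2 = (a - d)\<^sup>2 \<longleftrightarrow> (norm (X + f))\<^sup>2 = (a + d)\<^sup>2"
    unfolding minus plus d_def using \<open>a > 0\<close> by (simp add: field_simps power2_eq_square)
  show ?thesis
  proof
    assume sum: "norm (X - f) + norm (X + f) = 2 * a"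
    have "(norm (X + f) - norm (X - f)) * (norm (X - f) + norm (X + f)) = 4 * (X \<bullet> f)"
      using minus plus by (simp add: algebra_simps power2_eq_square)
    then have "norm (X + f) - norm (X - f) = 2 * d"
      unfolding sum d_def using \<open>a > 0\<close> by (simp add: field_simps)
    then have "norm (X - f) = a - d"
      using sum by linarith
    then show "a\<^sup>2 * (X \<bullet> X) - (X \<bullet> f)\<^sup>2 = a\<^sup>2 * (a\<^sup>2 - f \<bullet> f)"
      using eq_minus by simp
  next
    assume eq: "a\<^sup>2 * (X \<bullet> X) - (X \<bullet> f)\<^sup>2 = a\<^sup>2 * (a\<^sup>2 - f \<bullet> f)"
    have cs: "(X \<bullet> f)\<^sup>2 \<le> (X \<bullet> X) * (f \<bullet> f)" by (rule Cauchy_Schwarz_ineq)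
    have "(a\<^sup>2 - f \<bullet> f) * (X \<bullet> X) \<le> (a\<^sup>2 - f \<bullet> f) * a\<^sup>2"
      using eq cs by (simp add: algebra_simps)
    then have "X \<bullet> X \<le> a\<^sup>2" using ff by simp
    then have "(X \<bullet> X) * (f \<bullet> f) \<le> a\<^sup>2 * a\<^sup>2"
      using ff by (intro mult_mono) auto
    then have "(X \<bullet> f)\<^sup>2 \<le> (a * a)\<^sup>2"
      using cs by (simp add: power2_eq_square)
    then have "\<bar>X \<bullet> f\<bar> \<le> a * a"
      using abs_le_square_iff[of "X \<bullet> f" "a * a"] by simp
    then have "\<bar>d\<bar> \<le> a"
      unfolding d_def using \<open>a > 0\<close> by (simp add: abs_divide pos_divide_le_eq)
    moreover have "(norm (X - f))\<^sup>2 = (a - d)\<^sup>2" "(norm (X + f))\<^sup>2 = (a + d)\<^sup>2"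
      using eq eq_minus eq_plus by simp_all
    then have "norm (X - f) = \<bar>a - d\<bar>" "norm (X + f) = \<bar>a + d\<bar>"
      using power2_eq_iff_nonneg[of "norm (X - f)" "\<bar>a - d\<bar>"]
        power2_eq_iff_nonneg[of "norm (X + f)" "\<bar>a + d\<bar>"] by simp_all
    ultimately show "norm (X - f) + norm (X + f) = 2 * a" by linarith
  qed
qed

lemma gram_determinant_vec2_eq_0:
  fixes x y z :: "real^2"
  shows "(x \<bullet> x) * (y \<bullet> y) * (z \<bullet> z) + 2 * (x \<bullet> y) * (y \<bullet> z) * (z \<bullet> x)
    - (x \<bullet> x) * (y \<bullet> z)\<^sup>2 - (y \<bullet> y) * (z \<bullet> x)\<^sup>2 - (z \<bullet> z) * (x \<bullet> y)\<^sup>2 = 0"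
  by (simp add: inner_vec_def sum_2 algebra_simps power2_eq_square)

(* (X \<bullet> X) |V|^2 - (X \<bullet> V)^2 is |V|^2 times the squared distance from 0 to the line
   through X and Y = X + V, so this says: squared distance = a^2 - (v \<bullet> f)^2 with v = V / |V|. *)
definition tangency_criterion :: "'a::real_inner \<Rightarrow> real \<Rightarrow> 'a \<Rightarrow> 'a \<Rightarrow> bool" where
  "tangency_criterion f a X Y \<longleftrightarrow>
     (X \<bullet> X) * ((Y - X) \<bullet> (Y - X)) - (X \<bullet> (Y - X))\<^sup>2 = a\<^sup>2 * ((Y - X) \<bullet> (Y - X)) - ((Y - X) \<bullet> f)\<^sup>2"

lemma tangency_criterion_if_unique_intersection:
  fixes Z V f :: "real^2"
  assumes "norm f < a" and "V \<noteq> 0"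
    and unique: "\<exists>!t. norm (Z + t *\<^sub>R V - f) + norm (Z + t *\<^sub>R V + f) = 2 * a"
  shows "tangency_criterion f a Z (Z + V)"
proof -
  define \<alpha> where "\<alpha> = a\<^sup>2 * (V \<bullet> V) - (V \<bullet> f)\<^sup>2"
  define \<beta> where "\<beta> = 2 * (a\<^sup>2 * (Z \<bullet> V) - (Z \<bullet> f) * (V \<bullet> f))"
  define \<gamma> where "\<gamma> = a\<^sup>2 * (Z \<bullet> Z) - (Z \<bullet> f)\<^sup>2 - a\<^sup>2 * (a\<^sup>2 - f \<bullet> f)"
  have ff: "f \<bullet> f < a\<^sup>2" using assms(1) by (rule inner_self_less_power2)
  have "norm (Z + t *\<^sub>R V - f) + norm (Z + t *\<^sub>R V + f) = 2 * a \<longleftrightarrow> \<alpha> * t\<^sup>2 + \<beta> * t + \<gamma> = 0" for t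
    unfolding focal_sum_eq_iff[OF assms(1)] \<alpha>_def \<beta>_def \<gamma>_def
    by (simp add: inner_add inner_commute power2_eq_square algebra_simps)
  with unique have "\<exists>!t. \<alpha> * t\<^sup>2 + \<beta> * t + \<gamma> = 0" by simp
  moreover have "\<alpha> > 0"
  proof -
    have "(V \<bullet> f)\<^sup>2 \<le> (V \<bullet> V) * (f \<bullet> f)" by (rule Cauchy_Schwarz_ineq)
    also have "\<dots> < (V \<bullet> V) * a\<^sup>2" using \<open>V \<noteq> 0\<close> ff by simp
    finally show ?thesis unfolding \<alpha>_def by (simp add: algebra_simps)
  qed
  ultimately have "discrim \<alpha> \<beta> \<gamma> = 0" by (simp add: discrim_eq_0_if_unique_root)
  moreover note gram_determinant_vec2_eq_0[of Z V f, unfolded inner_commute[of f Z]]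
  ultimately have "a\<^sup>2 * (a\<^sup>2 - f \<bullet> f) * (\<alpha> - ((Z \<bullet> Z) * (V \<bullet> V) - (Z \<bullet> V)\<^sup>2)) = 0"
    unfolding discrim_def \<alpha>_def \<beta>_def \<gamma>_def by algebra
  moreover have "a\<^sup>2 * (a\<^sup>2 - f \<bullet> f) \<noteq> 0" using ff norm_ge_zero[of f] assms(1) by auto
  ultimately show ?thesis unfolding tangency_criterion_def \<alpha>_def by simp
qed

lemma tangent_line_unique_parameter:
  fixes X Y :: point
  assumes "X \<noteq> Y" and "tangent_line (line_through X Y) E"
  shows "\<exists>!t. X + t *\<^sub>R (Y - X) \<in> E"
proof -
  obtain P where P: "P \<in> line_through X Y" "P \<in> E"
    and uniq: "\<And>Q. Q \<in> line_through X Y \<Longrightarrow> Q \<in> E \<Longrightarrow> Q = P"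
    using assms(2) unfolding tangent_line_def by blast
  obtain t where t: "P = X + t *\<^sub>R (Y - X)" using P(1) unfolding line_through_def by blast
  have "s = t" if "X + s *\<^sub>R (Y - X) \<in> E" for s
  proof -
    have "X + s *\<^sub>R (Y - X) = P" using uniq that unfolding line_through_def by blast
    then show ?thesis using t \<open>X \<noteq> Y\<close> by simp
  qed
  then show ?thesis using P(2) t by blast
qed

lemma dist_foci_eq:
  fixes F1 F2 :: point
  assumes "ellipse_center F1 F2 = Oc"
  shows "dist F1 F2 = 2 * norm (F1 - Oc)"
  using dist_midpoint(1)[of F1 F2] assms unfolding ellipse_center_def dist_norm by simp

lemma tangent_line_ellipse_imp_tangency_criterion:
  fixes X Y F1 F2 Oc :: point
  assumes "dist F1 F2 < 2 * a" and centre: "ellipse_center F1 F2 = Oc" and "X \<noteq> Y"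
    and "tangent_line (line_through X Y) (ellipse F1 F2 a)"
  shows "tangency_criterion (F1 - Oc) a (X - Oc) (Y - Oc)"
proof -
  define f where "f = F1 - Oc"
  have "norm f < a" using assms(1) dist_foci_eq[OF centre] unfolding f_def by simp
  have F1: "F1 = Oc + f" and F2: "F2 = Oc - f"
    using centre unfolding f_def ellipse_center_def midpoint_def
    by (simp_all add: vec_eq_iff field_simps)
  have "\<exists>!t. X + t *\<^sub>R (Y - X) \<in> ellipse F1 F2 a"
    using assms(3,4) by (rule tangent_line_unique_parameter)
  then have "\<exists>!t. norm ((X - Oc) + t *\<^sub>R (Y - X) - f) + norm ((X - Oc) + t *\<^sub>R (Y - X) + f) = 2 * a"
    unfolding ellipse_def mem_Collect_eq dist_norm F1 F2 by (simp add: algebra_simps)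
  from tangency_criterion_if_unique_intersection[OF \<open>norm f < a\<close> _ this]
  show ?thesis using \<open>X \<noteq> Y\<close> unfolding f_def by simp
qed

section \<open>Triangles circumscribed about an ellipse centred at the circumcentre\<close>

definition complex_of_vec2 :: "real^2 \<Rightarrow> complex" where
  "complex_of_vec2 x = Complex (x $ 1) (x $ 2)"

lemma linear_complex_of_vec2: "linear complex_of_vec2"
  by (rule linearI) (simp_all add: complex_of_vec2_def complex_eq_iff)

lemma inj_complex_of_vec2: "inj complex_of_vec2"
  by (rule injI) (simp add: complex_of_vec2_def complex_eq_iff vec_eq_iff forall_2)

lemma inner_complex_of_vec2 [simp]: "complex_of_vec2 x \<bullet> complex_of_vec2 y = x \<bullet> y"
  by (simp add: complex_of_vec2_def inner_complex_def inner_vec_def sum_2)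

lemma norm_complex_of_vec2 [simp]: "cmod (complex_of_vec2 x) = norm x"
  by (simp add: norm_eq_sqrt_inner)

lemma complex_of_vec2_diff: "complex_of_vec2 (x - y) = complex_of_vec2 x - complex_of_vec2 y"
  by (simp add: complex_of_vec2_def complex_eq_iff)

lemma complex_of_vec2_add: "complex_of_vec2 (x + y) = complex_of_vec2 x + complex_of_vec2 y"
  by (simp add: complex_of_vec2_def complex_eq_iff)

lemma collinear_complex_of_vec2_image: "collinear (complex_of_vec2 ` S) \<longleftrightarrow> collinear S"
  by (simp add: collinear_aff_dim linear_complex_of_vec2 inj_complex_of_vec2)

lemma collinear_complex_of_vec2_translation:
  fixes A B C Oc :: point
  shows "collinear {complex_of_vec2 (A - Oc), complex_of_vec2 (B - Oc), complex_of_vec2 (C - Oc)}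
    \<longleftrightarrow> collinear {A, B, C}"
proof -
  have image: "{complex_of_vec2 (A - Oc), complex_of_vec2 (B - Oc), complex_of_vec2 (C - Oc)}
      = complex_of_vec2 ` (+) (- Oc) ` {A, B, C}"
    by auto
  show ?thesis unfolding image collinear_complex_of_vec2_image
    by (simp only: collinear_aff_dim aff_dim_translation_eq)
qed

lemma tangency_criterion_complex_of_vec2 [simp]:
  "tangency_criterion (complex_of_vec2 f) a (complex_of_vec2 X) (complex_of_vec2 Y) \<longleftrightarrow>
     tangency_criterion f a X Y"
  by (simp add: tangency_criterion_def flip: complex_of_vec2_diff)

lemma inner_complex_eq_Re_cnj: "z \<bullet> w = Re (z * cnj w)"
  by (simp add: inner_complex_def)

lemma mult_cnj_on_circle: "cmod z = \<rho> \<Longrightarrow> z * cnj z = of_real (\<rho>\<^sup>2)"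
  by (metis complex_norm_square)

lemma chord_square_on_circle:
  fixes z1 z2 :: complex
  assumes "cmod z1 = \<rho>" "cmod z2 = \<rho>"
  shows "of_real (\<rho>\<^sup>2) * (z2 - z1)\<^sup>2 = - of_real ((cmod (z2 - z1))\<^sup>2) * (z1 * z2)"
proof -
  have "- of_real ((cmod (z2 - z1))\<^sup>2) * (z1 * z2)
      = (z1 - z2) * (z1 * (z2 * cnj z2) - z2 * (z1 * cnj z1))"
    unfolding complex_norm_square by (simp add: algebra_simps)
  also have "\<dots> = of_real (\<rho>\<^sup>2) * (z2 - z1)\<^sup>2"
    by (simp add: mult_cnj_on_circle assms power2_eq_square algebra_simps)
  finally show ?thesis ..
qed

lemma circumscribed_chord_equation:
  fixes z1 z2 w :: complex
  assumes on_circle: "cmod z1 = \<rho>" "cmod z2 = \<rho>" and "z1 \<noteq> z2"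
    and tangent: "tangency_criterion w a z1 z2"
  shows "w\<^sup>2 \<bullet> (z1 * z2) = \<rho>\<^sup>2 * (z1 \<bullet> z2 + \<rho>\<^sup>2 + (cmod w)\<^sup>2 - 2 * a\<^sup>2)"
proof -
  define V where "V = z2 - z1"
  define p where "p = z1 \<bullet> z2"
  define q where "q = w\<^sup>2 \<bullet> (z1 * z2)"
  have z1z1: "z1 \<bullet> z1 = \<rho>\<^sup>2" and z2z2: "z2 \<bullet> z2 = \<rho>\<^sup>2"
    using on_circle by (simp_all flip: power2_norm_eq_inner)
  have z1V: "z1 \<bullet> V = p - \<rho>\<^sup>2" unfolding V_def by (simp add: inner_diff z1z1 p_def)
  have VV: "V \<bullet> V = 2 * (\<rho>\<^sup>2 - p)"
    unfolding V_def by (simp add: inner_diff inner_commute z1z1 z2z2 p_def)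
  have "V \<bullet> V > 0" using \<open>z1 \<noteq> z2\<close> unfolding V_def by simp
  then have p_lt: "p < \<rho>\<^sup>2" using VV by simp
  define s where "s = Re (V\<^sup>2 * cnj (w\<^sup>2))"
  have Vw: "2 * (V \<bullet> w)\<^sup>2 = (V \<bullet> V) * (w \<bullet> w) + s"
    unfolding s_def by (simp add: inner_complex_def power2_eq_square algebra_simps)
  have s: "\<rho>\<^sup>2 * s = - (V \<bullet> V) * q"
  proof -
    have "\<rho>\<^sup>2 * s = Re (of_real (\<rho>\<^sup>2) * V\<^sup>2 * cnj (w\<^sup>2))"
      unfolding s_def by (simp add: algebra_simps)
    also have "\<dots> = - (cmod V)\<^sup>2 * Re (z1 * z2 * cnj (w\<^sup>2))"
      unfolding V_def chord_square_on_circle[OF on_circle] by (simp add: algebra_simps)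
    also have "Re (z1 * z2 * cnj (w\<^sup>2)) = q"
      unfolding q_def by (simp add: inner_complex_def power2_eq_square algebra_simps)
    finally show ?thesis by (simp add: power2_norm_eq_inner)
  qed
  have T: "\<rho>\<^sup>2 * (V \<bullet> V) - (p - \<rho>\<^sup>2)\<^sup>2 = a\<^sup>2 * (V \<bullet> V) - (V \<bullet> w)\<^sup>2"
    using tangent unfolding tangency_criterion_def V_def[symmetric] z1z1 z1V .
  have "(\<rho>\<^sup>2 - p) * (q - \<rho>\<^sup>2 * (p + \<rho>\<^sup>2 + w \<bullet> w - 2 * a\<^sup>2)) = 0"
    using T Vw s unfolding VV by algebra
  with p_lt show ?thesis
    unfolding p_def q_def by (simp add: power2_norm_eq_inner)
qed

lemma inner_sigma2_pair_on_circle: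
  fixes z1 z2 z3 :: complex
  assumes "cmod z1 = \<rho>" "cmod z2 = \<rho>"
  shows "(z1 * z2 + z2 * z3 + z3 * z1) \<bullet> (z1 * z2) = \<rho>\<^sup>2 * (\<rho>\<^sup>2 + z2 \<bullet> z3 + z3 \<bullet> z1)"
proof -
  have "(z1 * z2 + z2 * z3 + z3 * z1) * cnj (z1 * z2)
      = (z1 * cnj z1) * (z2 * cnj z2) + (z2 * cnj z2) * (z3 * cnj z1)
        + (z1 * cnj z1) * (z3 * cnj z2)"
    by (simp add: algebra_simps)
  then show ?thesis
    by (simp add: inner_complex_eq_Re_cnj mult_cnj_on_circle assms power2_eq_square)
      (simp add: inner_complex_def algebra_simps)
qed

lemma pair_product_on_circle:
  fixes z1 z2 z3 c :: complex
  assumes "cmod z3 = \<rho>" "\<rho> \<noteq> 0" and "c * of_real (\<rho>\<^sup>2) = z1 * z2 * z3"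
  shows "z1 * z2 = c * cnj z3"
proof -
  have "of_real (\<rho>\<^sup>2) * (z1 * z2) = of_real (\<rho>\<^sup>2) * (c * cnj z3)"
    using mult_cnj_on_circle[OF assms(1)] assms(3) by (metis mult.assoc mult.commute)
  then show ?thesis using assms(2) by simp
qed

lemma complex_eq_0_if_inner_constant_on_noncollinear:
  fixes v z1 z2 z3 :: complex
  assumes "v \<bullet> z2 = v \<bullet> z1" "v \<bullet> z3 = v \<bullet> z1" and "\<not> collinear {z1, z2, z3}"
  shows "v = 0"
proof (rule ccontr)
  assume "v \<noteq> 0"
  have on_line: "z = z1 + Im ((z - z1) / v) *\<^sub>R (\<i> * v)" if "v \<bullet> z = v \<bullet> z1" for z
  proof -
    have "Re ((z - z1) * cnj v) = 0"
      using that unfolding inner_complex_def by (simp add: algebra_simps)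
    then have "(z - z1) / v = \<i> * of_real (Im ((z - z1) / v))"
      by (simp add: complex_eq_iff Re_complex_div_eq_0)
    then show ?thesis using \<open>v \<noteq> 0\<close> by (simp add: scaleR_conv_of_real field_simps)
  qed
  have "collinear {z1, z2, z3}"
    unfolding collinear_alt using on_line assms(1,2) by (metis empty_iff insert_iff)
  with assms(3) show False ..
qed

lemma focus_square_of_circumscribed_triangle:
  fixes z1 z2 z3 w :: complex
  assumes on_circle: "cmod z1 = \<rho>" "cmod z2 = \<rho>" "cmod z3 = \<rho>"
    and noncollinear: "\<not> collinear {z1, z2, z3}"
    and tangent: "tangency_criterion w a z1 z2" "tangency_criterion w a z2 z3"
      "tangency_criterion w a z3 z1"
  shows "w\<^sup>2 = - (z1 * z2 + z2 * z3 + z3 * z1)"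
proof -
  have distinct: "z1 \<noteq> z2" "z2 \<noteq> z3" "z3 \<noteq> z1"
    using noncollinear by (auto simp: insert_commute)
  have "\<rho> \<noteq> 0" using on_circle distinct by auto
  define \<sigma> where "\<sigma> = z1 * z2 + z2 * z3 + z3 * z1"
  define c where "c = z1 * z2 * z3 / of_real (\<rho>\<^sup>2)"
  define v where "v = cnj (w\<^sup>2 + \<sigma>) * c"
  define \<kappa> where "\<kappa> = \<rho>\<^sup>2 * (2 * \<rho>\<^sup>2 + (cmod w)\<^sup>2 - 2 * a\<^sup>2 + z1 \<bullet> z2 + z2 \<bullet> z3 + z3 \<bullet> z1)"
  have \<sigma>_rotate: "\<sigma> = z2 * z3 + z3 * z1 + z1 * z2" "\<sigma> = z3 * z1 + z1 * z2 + z2 * z3"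
    unfolding \<sigma>_def by (simp_all add: algebra_simps)
  have "(w\<^sup>2 + \<sigma>) \<bullet> (z1 * z2) = \<kappa>" "(w\<^sup>2 + \<sigma>) \<bullet> (z2 * z3) = \<kappa>"
    "(w\<^sup>2 + \<sigma>) \<bullet> (z3 * z1) = \<kappa>"
    using circumscribed_chord_equation[OF on_circle(1,2) distinct(1) tangent(1)]
      circumscribed_chord_equation[OF on_circle(2,3) distinct(2) tangent(2)]
      circumscribed_chord_equation[OF on_circle(3,1) distinct(3) tangent(3)]
      inner_sigma2_pair_on_circle[OF on_circle(1,2), of z3]
      inner_sigma2_pair_on_circle[OF on_circle(2,3), of z1]
      inner_sigma2_pair_on_circle[OF on_circle(3,1), of z2]
    unfolding \<kappa>_def \<sigma>_def[symmetric] \<sigma>_rotate[symmetric] inner_add_left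
    by (simp_all add: algebra_simps)
  \<comment> \<open>As z_i z_j = c conj z_k, the three side conditions make z \<mapsto> v \<bullet> z constant
    on the vertices.\<close>
  moreover have "v \<bullet> z = (w\<^sup>2 + \<sigma>) \<bullet> (c * cnj z)" for z
    unfolding v_def by (simp add: inner_complex_def power2_eq_square algebra_simps)
  moreover have "c * of_real (\<rho>\<^sup>2) = z1 * z2 * z3" unfolding c_def using \<open>\<rho> \<noteq> 0\<close> by simp
  then have "z1 * z2 = c * cnj z3" "z2 * z3 = c * cnj z1" "z3 * z1 = c * cnj z2"
    by (simp_all add: pair_product_on_circle on_circle \<open>\<rho> \<noteq> 0\<close> ac_simps)
  ultimately have "v \<bullet> z2 = v \<bullet> z1" "v \<bullet> z3 = v \<bullet> z1"
    by simp_all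
  then have "v = 0"
    using complex_eq_0_if_inner_constant_on_noncollinear noncollinear by blast
  moreover have "c \<noteq> 0" unfolding c_def using on_circle \<open>\<rho> \<noteq> 0\<close> by auto
  ultimately have "w\<^sup>2 + \<sigma> = 0" unfolding v_def by (metis complex_cnj_zero_iff mult_eq_0_iff)
  then show ?thesis unfolding \<sigma>_def by (simp only: eq_neg_iff_add_eq_0)
qed

lemma norm_sigma2_on_circle:
  fixes z1 z2 z3 :: complex
  assumes "cmod z1 = \<rho>" "cmod z2 = \<rho>" "cmod z3 = \<rho>"
  shows "cmod (z1 * z2 + z2 * z3 + z3 * z1) = \<rho> * cmod (z1 + z2 + z3)"
proof (cases "\<rho> = 0")
  case True
  then show ?thesis using assms by simp
next
  case False
  define c where "c = z1 * z2 * z3 / of_real (\<rho>\<^sup>2)"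
  have "c * of_real (\<rho>\<^sup>2) = z1 * z2 * z3" unfolding c_def using False by simp
  then have "z1 * z2 = c * cnj z3" "z2 * z3 = c * cnj z1" "z3 * z1 = c * cnj z2"
    by (simp_all add: pair_product_on_circle assms False ac_simps)
  then have "z1 * z2 + z2 * z3 + z3 * z1 = c * cnj (z1 + z2 + z3)"
    by (simp add: algebra_simps)
  moreover have "cmod c = \<rho>"
    unfolding c_def using assms False by (simp add: norm_mult norm_divide power2_eq_square)
  ultimately show ?thesis by (metis complex_mod_cnj norm_mult)
qed

lemma focal_distance_sq_of_circumscribed_triangle:
  fixes A B C Oc f :: point
  assumes on_circle: "norm (A - Oc) = R" "norm (B - Oc) = R" "norm (C - Oc) = R"
    and noncollinear: "\<not> collinear {A, B, C}"
    and tangent: "tangency_criterion f a (A - Oc) (B - Oc)"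
      "tangency_criterion f a (B - Oc) (C - Oc)" "tangency_criterion f a (C - Oc) (A - Oc)"
  shows "(norm f)\<^sup>2 = R * norm ((A - Oc) + (B - Oc) + (C - Oc))"
proof -
  let ?z = "\<lambda>P. complex_of_vec2 (P - Oc)"
  have "(complex_of_vec2 f)\<^sup>2 = - (?z A * ?z B + ?z B * ?z C + ?z C * ?z A)"
    by (rule focus_square_of_circumscribed_triangle)
      (use on_circle noncollinear tangent in \<open>simp_all add: collinear_complex_of_vec2_translation\<close>)
  then have "(norm f)\<^sup>2 = cmod (?z A * ?z B + ?z B * ?z C + ?z C * ?z A)"
    by (metis norm_complex_of_vec2 norm_minus_cancel norm_power)
  also have "\<dots> = R * cmod (?z A + ?z B + ?z C)"
    using on_circle by (simp add: norm_sigma2_on_circle)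
  finally show ?thesis by (simp only: norm_complex_of_vec2 flip: complex_of_vec2_add)
qed

section \<open>Acute and obtuse triangles\<close>

(* With the circumcentre at 0, x1 + x2 + x3 is the orthocentre H, and this is
   R^2 - OH^2 = 8 R^2 cos A cos B cos C after clearing the side lengths. *)
lemma orthocentre_circumcentre_identity:
  fixes x1 x2 x3 :: "real^2"
  assumes "x1 \<bullet> x1 = r" "x2 \<bullet> x2 = r" "x3 \<bullet> x3 = r"
  shows "(r - (x1 + x2 + x3) \<bullet> (x1 + x2 + x3))
      * (((x2 - x1) \<bullet> (x2 - x1)) * ((x3 - x2) \<bullet> (x3 - x2)) * ((x1 - x3) \<bullet> (x1 - x3)))
    = 8 * r * (((x2 - x1) \<bullet> (x3 - x1)) * ((x1 - x2) \<bullet> (x3 - x2)) * ((x1 - x3) \<bullet> (x2 - x3)))"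
  using gram_determinant_vec2_eq_0[of x1 x2 x3] assms
  by (simp add: inner_add inner_diff inner_commute) algebra

lemma arccos_lt_pi_half_iff: "\<bar>x\<bar> \<le> 1 \<Longrightarrow> arccos x < pi / 2 \<longleftrightarrow> x > 0"
  using arccos_less_mono[of x 0] by simp

lemma arccos_gt_pi_half_iff: "\<bar>x\<bar> \<le> 1 \<Longrightarrow> arccos x > pi / 2 \<longleftrightarrow> x < 0"
  using arccos_less_mono[of 0 x] by simp

lemma angle_lt_pi_half_iff_inner_pos:
  fixes u v :: "'a::real_inner"
  assumes "u \<noteq> 0" "v \<noteq> 0"
  shows "arccos ((u \<bullet> v) / (norm u * norm v)) < pi / 2 \<longleftrightarrow> u \<bullet> v > 0"
    and "arccos ((u \<bullet> v) / (norm u * norm v)) > pi / 2 \<longleftrightarrow> u \<bullet> v < 0"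
proof -
  have pos: "norm u * norm v > 0" using assms by simp
  then have bound: "\<bar>(u \<bullet> v) / (norm u * norm v)\<bar> \<le> 1"
    using Cauchy_Schwarz_ineq2[of u v] by (simp add: abs_divide)
  show "arccos ((u \<bullet> v) / (norm u * norm v)) < pi / 2 \<longleftrightarrow> u \<bullet> v > 0"
    and "arccos ((u \<bullet> v) / (norm u * norm v)) > pi / 2 \<longleftrightarrow> u \<bullet> v < 0"
    unfolding arccos_lt_pi_half_iff[OF bound] arccos_gt_pi_half_iff[OF bound]
    using pos by (simp_all add: zero_less_divide_iff divide_less_0_iff)
qed

lemma acute_triangle_iff_inner:
  fixes A B C :: point
  assumes "A \<noteq> B" "B \<noteq> C" "C \<noteq> A"
  shows "acute_triangle A B C \<longleftrightarrow>
    (B - A) \<bullet> (C - A) > 0 \<and> (A - B) \<bullet> (C - B) > 0 \<and> (A - C) \<bullet> (B - C) > 0"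
proof -
  have nz: "B - A \<noteq> 0" "C - A \<noteq> 0" "A - B \<noteq> 0" "C - B \<noteq> 0" "A - C \<noteq> 0" "B - C \<noteq> 0"
    using assms by auto
  show ?thesis
    unfolding acute_triangle_def vertex_angle_def angle_lt_pi_half_iff_inner_pos(1)[OF nz(1,2)]
      angle_lt_pi_half_iff_inner_pos(1)[OF nz(3,4)] angle_lt_pi_half_iff_inner_pos(1)[OF nz(5,6)] ..
qed

lemma obtuse_triangle_iff_inner:
  fixes A B C :: point
  assumes "A \<noteq> B" "B \<noteq> C" "C \<noteq> A"
  shows "obtuse_triangle A B C \<longleftrightarrow>
    (B - A) \<bullet> (C - A) < 0 \<or> (A - B) \<bullet> (C - B) < 0 \<or> (A - C) \<bullet> (B - C) < 0"
proof -
  have nz: "B - A \<noteq> 0" "C - A \<noteq> 0" "A - B \<noteq> 0" "C - B \<noteq> 0" "A - C \<noteq> 0" "B - C \<noteq> 0"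
    using assms by auto
  show ?thesis
    unfolding obtuse_triangle_def vertex_angle_def angle_lt_pi_half_iff_inner_pos(2)[OF nz(1,2)]
      angle_lt_pi_half_iff_inner_pos(2)[OF nz(3,4)] angle_lt_pi_half_iff_inner_pos(2)[OF nz(5,6)] ..
qed

lemma sign_of_product_if_pairwise_sums_pos:
  fixes p q s :: real
  assumes "p + q > 0" "q + s > 0" "p + s > 0"
  shows "p * q * s > 0 \<longleftrightarrow> p > 0 \<and> q > 0 \<and> s > 0"
    and "p * q * s < 0 \<longleftrightarrow> p < 0 \<or> q < 0 \<or> s < 0"
  using assms by (auto simp: zero_less_mult_iff mult_less_0_iff)

lemma less_iff_power2_less:
  fixes x y :: real
  assumes "0 \<le> x" "0 \<le> y"
  shows "x < y \<longleftrightarrow> x\<^sup>2 < y\<^sup>2"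
  using assms power_mono_iff[of y x 2] by (simp add: not_le[symmetric])

lemma less_iff_of_power2_eq_mult:
  fixes c R h :: real
  assumes "c\<^sup>2 = R * h" "0 \<le> c" "0 < R"
  shows "c < R \<longleftrightarrow> h < R" and "R < c \<longleftrightarrow> R < h"
proof -
  have "c < R \<longleftrightarrow> R * h < R * R" "R < c \<longleftrightarrow> R * R < R * h"
    using less_iff_power2_less[of c R] less_iff_power2_less[of R c] assms
    by (simp_all add: power2_eq_square)
  then show "c < R \<longleftrightarrow> h < R" "R < c \<longleftrightarrow> R < h" using \<open>0 < R\<close> by simp_all
qed

lemma circumradius_pos:
  fixes A B Oc :: point
  assumes "A \<noteq> B" "norm (A - Oc) = R" "norm (B - Oc) = R"
  shows "R > 0"
  using assms by (metis norm_eq_zero norm_ge_zero order_le_less right_minus_eq)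

lemma acute_obtuse_iff_orthocentre_distance:
  fixes A B C Oc :: point
  assumes noncollinear: "\<not> collinear {A, B, C}"
    and on_circle: "norm (A - Oc) = R" "norm (B - Oc) = R" "norm (C - Oc) = R"
  shows "(acute_triangle A B C \<longleftrightarrow> norm ((A - Oc) + (B - Oc) + (C - Oc)) < R) \<and>
         (obtuse_triangle A B C \<longleftrightarrow> norm ((A - Oc) + (B - Oc) + (C - Oc)) > R)"
proof -
  define x1 x2 x3 where "x1 = A - Oc" and "x2 = B - Oc" and "x3 = C - Oc"
  define h where "h = x1 + x2 + x3"
  define dA dB dC where "dA = (x2 - x1) \<bullet> (x3 - x1)" and "dB = (x1 - x2) \<bullet> (x3 - x2)"
    and "dC = (x1 - x3) \<bullet> (x2 - x3)"
  have distinct: "A \<noteq> B" "B \<noteq> C" "C \<noteq> A"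
    using noncollinear by (auto simp: insert_commute)
  have sides: "(x2 - x1) \<bullet> (x2 - x1) > 0" "(x3 - x2) \<bullet> (x3 - x2) > 0" "(x1 - x3) \<bullet> (x1 - x3) > 0"
    using distinct unfolding x1_def x2_def x3_def by auto
  have "R > 0" using distinct(1) on_circle(1,2) by (rule circumradius_pos)
  have "x1 \<bullet> x1 = R\<^sup>2" "x2 \<bullet> x2 = R\<^sup>2" "x3 \<bullet> x3 = R\<^sup>2"
    using on_circle unfolding x1_def x2_def x3_def by (simp_all flip: power2_norm_eq_inner)
  from orthocentre_circumcentre_identity[OF this]
  have euler: "(R\<^sup>2 - (norm h)\<^sup>2)
      * (((x2 - x1) \<bullet> (x2 - x1)) * ((x3 - x2) \<bullet> (x3 - x2)) * ((x1 - x3) \<bullet> (x1 - x3)))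
    = 8 * R\<^sup>2 * (dA * dB * dC)"
    unfolding h_def dA_def dB_def dC_def power2_norm_eq_inner .
  have "dA + dB > 0" "dB + dC > 0" "dA + dC > 0"
    using sides unfolding dA_def dB_def dC_def
    by (simp_all add: inner_diff inner_commute algebra_simps)
  note sign = sign_of_product_if_pairwise_sums_pos[OF this]
  define P where "P = ((x2 - x1) \<bullet> (x2 - x1)) * ((x3 - x2) \<bullet> (x3 - x2)) * ((x1 - x3) \<bullet> (x1 - x3))"
  have "P > 0" unfolding P_def using sides by simp
  have "norm h < R \<longleftrightarrow> (R\<^sup>2 - (norm h)\<^sup>2) * P > 0"
    using less_iff_power2_less[of "norm h" R] \<open>R > 0\<close> \<open>P > 0\<close> by (simp add: zero_less_mult_iff)
  also have "\<dots> \<longleftrightarrow> dA * dB * dC > 0"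
    unfolding P_def euler using \<open>R > 0\<close> by (simp add: zero_less_mult_iff)
  finally have acute: "norm h < R \<longleftrightarrow> dA * dB * dC > 0" .
  have "norm h > R \<longleftrightarrow> (R\<^sup>2 - (norm h)\<^sup>2) * P < 0"
    using less_iff_power2_less[of R "norm h"] \<open>R > 0\<close> \<open>P > 0\<close> by (simp add: mult_less_0_iff)
  also have "\<dots> \<longleftrightarrow> dA * dB * dC < 0"
    unfolding P_def euler using \<open>R > 0\<close> by (simp add: mult_less_0_iff)
  finally have obtuse: "norm h > R \<longleftrightarrow> dA * dB * dC < 0" .
  show ?thesis
    using sign acute obtuse
    unfolding acute_triangle_iff_inner[OF distinct] obtuse_triangle_iff_inner[OF distinct]
    by (simp add: h_def dA_def dB_def dC_def x1_def x2_def x3_def)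
qed

theorem corollary2p1:
  fixes A B C Oc F1 F2 :: point and a R :: real
  assumes "nondegenerate_triangle A B C"
    and "dist F1 F2 < 2 * a"
    and "circumscribed_about A B C (ellipse F1 F2 a)"
    and "is_circumcenter Oc A B C"
    and "R = dist Oc A"
    and "ellipse_center F1 F2 = Oc"
  shows "(acute_triangle A B C \<longleftrightarrow> R > linear_eccentricity F1 F2) \<and>
         (obtuse_triangle A B C \<longleftrightarrow> R < linear_eccentricity F1 F2)"
proof -
  have noncollinear: "\<not> collinear {A, B, C}"
    using assms(1) unfolding nondegenerate_triangle_def .
  then have distinct: "A \<noteq> B" "B \<noteq> C" "C \<noteq> A" by (auto simp: insert_commute)
  have on_circle: "norm (A - Oc) = R" "norm (B - Oc) = R" "norm (C - Oc) = R"
    using assms(4,5) unfolding is_circumcenter_def by (simp_all add: dist_norm norm_minus_commute)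
  note tangency = tangent_line_ellipse_imp_tangency_criterion[OF assms(2,6)]
  have "tangency_criterion (F1 - Oc) a (A - Oc) (B - Oc)"
    "tangency_criterion (F1 - Oc) a (B - Oc) (C - Oc)"
    "tangency_criterion (F1 - Oc) a (C - Oc) (A - Oc)"
    using tangency[OF distinct(1)] tangency[OF distinct(2)] tangency[OF distinct(3)] assms(3)
    unfolding circumscribed_about_def by blast+
  then have "(norm (F1 - Oc))\<^sup>2 = R * norm ((A - Oc) + (B - Oc) + (C - Oc))"
    using focal_distance_sq_of_circumscribed_triangle on_circle noncollinear by blast
  note compare =
    less_iff_of_power2_eq_mult[OF this norm_ge_zero circumradius_pos[OF distinct(1) on_circle(1,2)]]
  have "linear_eccentricity F1 F2 = norm (F1 - Oc)"
    unfolding linear_eccentricity_def dist_foci_eq[OF assms(6)] by simp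
  then show ?thesis
    using acute_obtuse_iff_orthocentre_distance[OF noncollinear on_circle] compare by simp
qed

end
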